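(* For a positive integer $m$, let $K(m)$ denote the least positive integer $K$ such that there exist $a_1,a_2,a_3,a_4\in\mathbb{Z}$ with $m=a_1^2+a_2^2+a_3^2+a_4^2$ and, for each $i$, either $a_i=0$ or $a_i\ge \frac{\sqrt{m}}{K}$. If $n$ is an even positive integer with $K(n)=\tilde K$, then there are infinitely many positive integers $m$ with $K(m)=\tilde K$.
   Context: $K(m)$ is well defined for every positive integer $m$ by Lagrange's four-square theorem. *)

theory Defs
  imports Complex_Main
begin

definition good_rep :: "nat \<Rightarrow> nat \<Rightarrow> bool" where
  "good_rep m K \<longleftrightarrow> (\<exists>a :: nat \<Rightarrow> int.
      int m = (\<Sum>i<4. (a i)^2) \<and>
      (\<forall>i<4. a i = 0 \<or> real_of_int (a i) \<ge> sqrt (real m) / real K))"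

definition Kfun :: "nat \<Rightarrow> nat" where
  "Kfun m = (LEAST K. K > 0 \<and> good_rep m K)"

end

theory Submission
  imports Defs
begin

text \<open>For even \<open>n\<close>, a sum of four squares equal to \<open>4n\<close> is divisible by 8, which forces all
  four squares to be even; halving the entries turns an admissible representation of \<open>4n\<close> into
  one of \<open>n\<close> with the same \<open>K\<close>, and doubling does the converse. Hence \<open>K(4n) = K(n)\<close>,
  and \<open>K\<close> is constant on the infinite set \<open>{4\<^sup>k n}\<close>.\<close>

lemma odd_square_mod_8:
  fixes b :: int
  assumes "odd b"
  shows "b\<^sup>2 mod 8 = 1"
proof -
  obtain k where k: "b = 2 * k + 1" using assms by (metis oddE)
  have "even (k * (k + 1))" by simp
  then obtain j where "k * (k + 1) = 2 * j" by blast
  then have "b\<^sup>2 = 8 * j + 1" using k by (simp add: power2_eq_square algebra_simps)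
  then show ?thesis by simp
qed

lemma even_square_mod_8:
  fixes b :: int
  assumes "even b"
  shows "b\<^sup>2 mod 8 = 0 \<or> b\<^sup>2 mod 8 = 4"
proof -
  obtain k where "b = 2 * k" using assms by blast
  then have "b\<^sup>2 = 4 * k\<^sup>2" by (simp add: power_mult_distrib)
  then show ?thesis by presburger
qed

lemma sum_four_squares_8_dvd_imp_even:
  fixes b0 b1 b2 b3 :: int
  assumes "8 dvd b0\<^sup>2 + b1\<^sup>2 + b2\<^sup>2 + b3\<^sup>2"
  shows "even b0 \<and> even b1 \<and> even b2 \<and> even b3"
proof -
  have residue: "b\<^sup>2 mod 8 \<in> {0, 1, 4} \<and> (odd b \<longleftrightarrow> b\<^sup>2 mod 8 = 1)" for b :: int
    using odd_square_mod_8[of b] even_square_mod_8[of b] by auto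
  have no_one: "r0 \<noteq> 1 \<and> r1 \<noteq> 1 \<and> r2 \<noteq> 1 \<and> r3 \<noteq> 1"
    if "r0 \<in> {0, 1, 4}" "r1 \<in> {0, 1, 4}" "r2 \<in> {0, 1, 4}" "r3 \<in> {0, 1, 4}"
      "(r0 + r1 + r2 + r3) mod 8 = 0" for r0 r1 r2 r3 :: int
    using that by auto
  have "(b0\<^sup>2 + b1\<^sup>2 + b2\<^sup>2 + b3\<^sup>2) mod 8 = 0"
    using assms by simp
  then have "(b0\<^sup>2 mod 8 + b1\<^sup>2 mod 8 + b2\<^sup>2 mod 8 + b3\<^sup>2 mod 8) mod 8 = 0"
    by (metis mod_add_left_eq mod_add_right_eq add.assoc)
  then show ?thesis
    using no_one residue by meson
qed

lemma admissible_entry_scale_iff: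
  fixes x :: int and c m K :: nat
  assumes "c > 0"
  shows "(int c * x = 0 \<or> real_of_int (int c * x) \<ge> sqrt (real (c\<^sup>2 * m)) / real K)
     \<longleftrightarrow> (x = 0 \<or> real_of_int x \<ge> sqrt (real m) / real K)"
proof -
  have "sqrt (real (c\<^sup>2 * m)) / real K = real c * (sqrt (real m) / real K)"
    by (simp add: real_sqrt_mult)
  moreover have "real c > 0" using assms by simp
  ultimately show ?thesis
    using assms by (simp add: mult_le_cancel_left_pos del: times_divide_eq_right)
qed

lemma good_rep_mult_square:
  assumes "c > 0" and "good_rep m K"
  shows "good_rep (c\<^sup>2 * m) K"
proof -
  obtain a :: "nat \<Rightarrow> int" where sum: "int m = (\<Sum>i<4. (a i)\<^sup>2)"
    and adm: "\<forall>i<4. a i = 0 \<or> real_of_int (a i) \<ge> sqrt (real m) / real K"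
    using assms(2) unfolding good_rep_def by blast
  have "int (c\<^sup>2 * m) = (\<Sum>i<4. (int c * a i)\<^sup>2)"
    using sum by (simp add: power_mult_distrib sum_distrib_left)
  moreover have "\<forall>i<4. int c * a i = 0 \<or> real_of_int (int c * a i) \<ge> sqrt (real (c\<^sup>2 * m)) / real K"
    using adm admissible_entry_scale_iff[OF assms(1)] by blast
  ultimately show ?thesis
    unfolding good_rep_def by (rule exI[of _ "\<lambda>i. int c * a i", OF conjI])
qed

lemma good_rep_cancel_square:
  fixes b :: "nat \<Rightarrow> int"
  assumes "c > 0"
    and sum: "int (c\<^sup>2 * m) = (\<Sum>i<4. (b i)\<^sup>2)"
    and adm: "\<forall>i<4. b i = 0 \<or> real_of_int (b i) \<ge> sqrt (real (c\<^sup>2 * m)) / real K"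
    and dvd: "\<forall>i<4. int c dvd b i"
  shows "good_rep m K"
proof -
  define a where "a i = b i div int c" for i
  have b_eq: "b i = int c * a i" if "i < 4" for i
    using dvd that unfolding a_def by simp
  have "int c ^ 2 * int m = int c ^ 2 * (\<Sum>i<4. (a i)\<^sup>2)"
    using sum b_eq by (simp add: power_mult_distrib sum_distrib_left)
  then have "int m = (\<Sum>i<4. (a i)\<^sup>2)"
    using assms(1) by simp
  moreover have "\<forall>i<4. a i = 0 \<or> real_of_int (a i) \<ge> sqrt (real m) / real K"
    using adm b_eq admissible_entry_scale_iff[OF assms(1)] by metis
  ultimately show ?thesis
    unfolding good_rep_def by (rule exI[of _ a, OF conjI])
qed

lemma good_rep_4_mult_iff:
  assumes "even n"
  shows "good_rep (4 * n) K \<longleftrightarrow> good_rep n K"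
proof
  assume "good_rep (4 * n) K"
  then obtain b :: "nat \<Rightarrow> int" where sum: "int (2\<^sup>2 * n) = (\<Sum>i<4. (b i)\<^sup>2)"
    and adm: "\<forall>i<4. b i = 0 \<or> real_of_int (b i) \<ge> sqrt (real (2\<^sup>2 * n)) / real K"
    unfolding good_rep_def by auto
  have "8 dvd int (4 * n)" using assms by fastforce
  then have "8 dvd (b 0)\<^sup>2 + (b 1)\<^sup>2 + (b 2)\<^sup>2 + (b 3)\<^sup>2"
    using sum by (simp add: eval_nat_numeral)
  then have "even (b i)" if "i < 4" for i
    using sum_four_squares_8_dvd_imp_even that by (auto simp: less_Suc_eq eval_nat_numeral)
  then show "good_rep n K"
    using good_rep_cancel_square[of 2 n b K] sum adm by simp
next
  assume "good_rep n K"
  from good_rep_mult_square[of 2, OF _ this] show "good_rep (4 * n) K" by simp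
qed

lemma Kfun_4_mult:
  assumes "even n"
  shows "Kfun (4 * n) = Kfun n"
  unfolding Kfun_def using good_rep_4_mult_iff[OF assms] by simp

lemma Kfun_4_power_mult:
  assumes "even n"
  shows "Kfun (4 ^ k * n) = Kfun n"
proof (induction k)
  case (Suc k)
  have "Kfun (4 ^ Suc k * n) = Kfun (4 * (4 ^ k * n))" by (simp add: mult.assoc)
  also have "\<dots> = Kfun (4 ^ k * n)" using assms by (intro Kfun_4_mult) simp
  finally show ?case using Suc.IH by simp
qed simp

theorem proposition5:
  fixes n :: nat
  assumes "n > 0" and "even n"
  shows "infinite {m :: nat. m > 0 \<and> Kfun m = Kfun n}"
proof -
  have "inj (\<lambda>k::nat. 4 ^ k * n)"
    using assms(1) by (intro injI) (simp add: power_inject_exp)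
  then have "infinite (range (\<lambda>k::nat. 4 ^ k * n))"
    using finite_imageD infinite_UNIV_nat by blast
  moreover have "range (\<lambda>k::nat. 4 ^ k * n) \<subseteq> {m. m > 0 \<and> Kfun m = Kfun n}"
    using assms Kfun_4_power_mult by auto
  ultimately show ?thesis using infinite_super by blast
qed

end
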